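(* For the iterates of the Jacobi scheme described in the context, for all $k\ge0$, $$\lambda^k=-\theta z^k-\tau_z\Delta z^k.$$
   Context: Data: $A_t\in\mathbb{R}^{m\times n_t}$, $X_t\subseteq\mathbb{R}^{n_t}$, $f_t:\mathbb{R}^{n_t}\to\mathbb{R}$ ($t\in[T]$), $b\in\mathbb{R}^m$, $Ax=\sum_tA_tx_t$, $A_{\neq t}x_{\neq t}=\sum_{s\neq t}A_sx_s$, $\|w\|_M=\sqrt{w^\top Mw}$. Jacobi scheme: given $x^0\in X_1\times\cdots\times X_T$, $z^0,\lambda^0\in\mathbb{R}^m$, $\rho,\theta,\tau_x,\tau_z>0$, for $k\ge1$: (i) each $x_t^k$ is a local minimizer of $\min_{x_t\in X_t}f_t(x_t)+(\lambda^{k-1})^\top A_tx_t+\frac{\rho}{2}\|A_tx_t+A_{\neq t}x^{k-1}_{\neq t}+z^{k-1}-b\|^2+\frac{\tau_x}{2}\|x_t-x_t^{k-1}\|^2_{A_t^\top A_t}$; (ii) $z^k=(\tau_zz^{k-1}-\rho(Ax^k-b)-\lambda^{k-1})/(\tau_z+\rho+\theta)$; (iii) $\lambda^k=\lambda^{k-1}+\rho(Ax^k+z^k-b)$. For $k\ge1$, $\Delta z^k=z^k-z^{k-1}$, and $\Delta z^0:=-\tau_z^{-1}(\lambda^0+\theta z^0)$. *)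

theory Defs
  imports "HOL-Analysis.Analysis"
begin

text \<open>A block x_t in R^{n_t} is modelled as a
function nat => real whose entries with index >= n_t are zero. The block matrix
A_t in R^{m x n_t} is a function 'm => nat => real (only columns j < n_t matter).\<close>

definition in_Rn :: "nat \<Rightarrow> (nat \<Rightarrow> real) \<Rightarrow> bool" where
  "in_Rn nt v \<longleftrightarrow> (\<forall>j\<ge>nt. v j = 0)"

definition blk_app :: "('m::finite \<Rightarrow> nat \<Rightarrow> real) \<Rightarrow> nat \<Rightarrow> (nat \<Rightarrow> real) \<Rightarrow> real^'m" where
  "blk_app At nt v = (\<chi> i. \<Sum>j<nt. At i j * v j)"

definition dist_n :: "nat \<Rightarrow> (nat \<Rightarrow> real) \<Rightarrow> (nat \<Rightarrow> real) \<Rightarrow> real" where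
  "dist_n nt u v = sqrt (\<Sum>j<nt. (u j - v j)^2)"

definition local_min_on :: "nat \<Rightarrow> (nat \<Rightarrow> real) set \<Rightarrow> ((nat \<Rightarrow> real) \<Rightarrow> real) \<Rightarrow> (nat \<Rightarrow> real) \<Rightarrow> bool" where
  "local_min_on nt S F v \<longleftrightarrow> v \<in> S \<and> (\<exists>e>0. \<forall>y\<in>S. dist_n nt y v < e \<longrightarrow> F v \<le> F y)"

definition Aop :: "nat \<Rightarrow> (nat \<Rightarrow> 'm::finite \<Rightarrow> nat \<Rightarrow> real) \<Rightarrow> (nat \<Rightarrow> nat) \<Rightarrow> (nat \<Rightarrow> nat \<Rightarrow> real) \<Rightarrow> real^'m" where
  "Aop T A n x = (\<Sum>t\<in>{1..T}. blk_app (A t) (n t) (x t))"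

definition Aneq :: "nat \<Rightarrow> (nat \<Rightarrow> 'm::finite \<Rightarrow> nat \<Rightarrow> real) \<Rightarrow> (nat \<Rightarrow> nat) \<Rightarrow> nat \<Rightarrow> (nat \<Rightarrow> nat \<Rightarrow> real) \<Rightarrow> real^'m" where
  "Aneq T A n t x = (\<Sum>s\<in>{1..T}-{t}. blk_app (A s) (n s) (x s))"

text \<open>The x_t-subproblem objective at iteration k; note
  norm(w)_{A_t^T A_t}^2 = w^T A_t^T A_t w = norm (A_t w)^2.\<close>
definition sub_obj ::
  "nat \<Rightarrow> (nat \<Rightarrow> 'm::finite \<Rightarrow> nat \<Rightarrow> real) \<Rightarrow> (nat \<Rightarrow> nat) \<Rightarrow> (nat \<Rightarrow> (nat \<Rightarrow> real) \<Rightarrow> real)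
   \<Rightarrow> real^'m \<Rightarrow> real \<Rightarrow> real \<Rightarrow> nat \<Rightarrow> (nat \<Rightarrow> nat \<Rightarrow> real) \<Rightarrow> real^'m \<Rightarrow> real^'m
   \<Rightarrow> (nat \<Rightarrow> real) \<Rightarrow> real" where
  "sub_obj T A n f b \<rho> \<tau>x t xprev zprev lprev y =
     f t y + lprev \<bullet> blk_app (A t) (n t) y
     + \<rho> / 2 * (norm (blk_app (A t) (n t) y + Aneq T A n t xprev + zprev - b))\<^sup>2
     + \<tau>x / 2 * (norm (blk_app (A t) (n t) (\<lambda>j. y j - xprev t j)))\<^sup>2"

definition delta_z :: "real \<Rightarrow> real \<Rightarrow> (nat \<Rightarrow> real^'m::finite) \<Rightarrow> (nat \<Rightarrow> real^'m) \<Rightarrow> nat \<Rightarrow> real^'m" where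
  "delta_z \<tau>z \<theta> z lam k =
     (if k = 0 then - (1 / \<tau>z) *\<^sub>R (lam 0 + \<theta> *\<^sub>R z 0) else z k - z (k - 1))"

end

theory Submission
  imports Defs
begin

text \<open>The z-update says (\<tau>z + \<rho> + \<theta>) z^k = \<tau>z z^{k-1} - \<rho> (A x^k - b) - \<lambda>^{k-1}; substituting
  \<rho> (A x^k - b) from it into the multiplier update gives \<lambda>^k = -\<theta> z^k - \<tau>z (z^k - z^{k-1}).
  For k = 0 the identity is exactly how \<Delta>z^0 is defined.\<close>

lemma multiplier_update_eq:
  fixes z z' lam lam' r :: "'a::real_vector" and \<tau> \<rho> \<theta> :: real
  assumes nonzero: "\<tau> + \<rho> + \<theta> \<noteq> 0"
    and z_update: "z' = (1 / (\<tau> + \<rho> + \<theta>)) *\<^sub>R (\<tau> *\<^sub>R z - \<rho> *\<^sub>R r - lam)"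
    and lam_update: "lam' = lam + \<rho> *\<^sub>R (r + z')"
  shows "lam' = - \<theta> *\<^sub>R z' - \<tau> *\<^sub>R (z' - z)"
proof -
  have "(\<tau> + \<rho> + \<theta>) *\<^sub>R z' = \<tau> *\<^sub>R z - \<rho> *\<^sub>R r - lam"
    using z_update nonzero by simp
  then have "\<rho> *\<^sub>R r = \<tau> *\<^sub>R z - (\<tau> + \<rho> + \<theta>) *\<^sub>R z' - lam"
    by (simp add: algebra_simps)
  then show ?thesis
    using lam_update by (simp add: algebra_simps)
qed

theorem lemma1:
  fixes T :: nat and n :: "nat \<Rightarrow> nat"
    and A :: "nat \<Rightarrow> 'm::finite \<Rightarrow> nat \<Rightarrow> real"
    and X :: "nat \<Rightarrow> (nat \<Rightarrow> real) set"
    and f :: "nat \<Rightarrow> (nat \<Rightarrow> real) \<Rightarrow> real"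
    and b :: "real^'m"
    and x :: "nat \<Rightarrow> nat \<Rightarrow> (nat \<Rightarrow> real)"
    and z lam :: "nat \<Rightarrow> real^'m"
    and \<rho> \<theta> \<tau>x \<tau>z :: real
  assumes X_sub: "\<And>t. t \<in> {1..T} \<Longrightarrow> X t \<subseteq> {v. in_Rn (n t) v}"
    and pos: "\<rho> > 0" "\<theta> > 0" "\<tau>x > 0" "\<tau>z > 0"
    and x0: "\<And>t. t \<in> {1..T} \<Longrightarrow> x 0 t \<in> X t"
    and xstep: "\<And>k t. k \<ge> 1 \<Longrightarrow> t \<in> {1..T} \<Longrightarrow>
       local_min_on (n t) (X t)
         (sub_obj T A n f b \<rho> \<tau>x t (x (k - 1)) (z (k - 1)) (lam (k - 1))) (x k t)"
    and zstep: "\<And>k. k \<ge> 1 \<Longrightarrow>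
       z k = (1 / (\<tau>z + \<rho> + \<theta>)) *\<^sub>R
               (\<tau>z *\<^sub>R z (k - 1) - \<rho> *\<^sub>R (Aop T A n (x k) - b) - lam (k - 1))"
    and lamstep: "\<And>k. k \<ge> 1 \<Longrightarrow>
       lam k = lam (k - 1) + \<rho> *\<^sub>R (Aop T A n (x k) + z k - b)"
  shows "\<forall>k. lam k = - \<theta> *\<^sub>R z k - \<tau>z *\<^sub>R delta_z \<tau>z \<theta> z lam k"
proof
  fix k
  show "lam k = - \<theta> *\<^sub>R z k - \<tau>z *\<^sub>R delta_z \<tau>z \<theta> z lam k"
  proof (cases "k = 0")
    case True
    then show ?thesis
      using pos by (simp add: delta_z_def algebra_simps)
  next
    case False
    then have "k \<ge> 1" by simp
    have "lam k = - \<theta> *\<^sub>R z k - \<tau>z *\<^sub>R (z k - z (k - 1))"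
    proof (rule multiplier_update_eq)
      show "\<tau>z + \<rho> + \<theta> \<noteq> 0" using pos by simp
      show "z k = (1 / (\<tau>z + \<rho> + \<theta>)) *\<^sub>R
                    (\<tau>z *\<^sub>R z (k - 1) - \<rho> *\<^sub>R (Aop T A n (x k) - b) - lam (k - 1))"
        using zstep[OF \<open>k \<ge> 1\<close>] .
      show "lam k = lam (k - 1) + \<rho> *\<^sub>R (Aop T A n (x k) - b + z k)"
        using lamstep[OF \<open>k \<ge> 1\<close>] by (simp add: algebra_simps)
    qed
    then show ?thesis
      using False by (simp add: delta_z_def)
  qed
qed

end
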